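(* Let $q$ be a prime power with $q\equiv1\pmod4$, let $n=q+1$, $n'=n/2$, $\ell=(n-2)/4$, and $P=\{-\ell,\dots,-1,0,1,\dots,\ell\}\subseteq\mathbb{Z}_n$. Let $\theta\in\mathbb{F}_{q^2}$ be a primitive $n$-th root of unity (used to define $f_P$ and $C_P$). Then $P$ is $\mu_q$-invariant, and (i) $C_P\subseteq R_n$ is an iso-self-dual cyclic code, with $\varphi_{-1,n'}(C_P)=C_P^\perp$; (ii) $C_P$ is the alternant code obtained by restricting to $\mathbb{F}_q$ the generalized Reed–Solomon code $\{(a(1),\theta^{\ell}a(\theta^{-1}),\dots,\theta^{(n-1)\ell}a(\theta^{-(n-1)})) : a(X)\in\mathbb{F}_{q^2}[X],\ \deg a(X)<n'\}$ over $\mathbb{F}_{q^2}$, i.e. $C_P$ is the set of codewords of that code with all coordinates in $\mathbb{F}_q$; in particular $C_P$ is a $[q+1,\frac{q+1}{2},\frac{q+3}{2}]$ MDS code over $\mathbb{F}_q$.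
   Context: $\mathbb{Z}_n=\mathbb{Z}/n\mathbb{Z}$. $R_n=\mathbb{F}_q[X]/\langle X^n-1\rangle$, elements identified with representatives $a_0+\dots+a_{n-1}X^{n-1}$ and words $(a_0,\dots,a_{n-1})\in\mathbb{F}_q^n$; cyclic codes are ideals of $R_n$; $C^\perp$ is the Euclidean dual. $\mu_q:\mathbb{Z}_n\to\mathbb{Z}_n$, $i\mapsto qi\bmod n$; $P$ is $\mu_q$-invariant if $\mu_q(P)=P$. For $\mu_q$-invariant $P$, $f_P(X)=\prod_{i\in P}(X-\theta^i)\in\mathbb{F}_q[X]$ and $C_P$ is the ideal of $R_n$ generated by $(X^n-1)/f_P(X)$ (the cyclic code with check polynomial $f_P$). For $s\in\mathbb{Z}_n^*$, $t\in\mathbb{Z}_n$ with $qt\equiv t\pmod n$, $\varphi_{s,t}:R_n\to R_n$, $a(X)\mapsto a(\theta^{-t}X^{s^{-1}})\bmod(X^n-1)$ with $s^{-1}$ a positive integer, $ss^{-1}\equiv1\pmod n$. A cyclic code $C$ is iso-self-dual if $\varphi_{s,t}(C)=C^\perp$ for some such $s,t$. *)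

theory Defs
  imports "HOL-Computational_Algebra.Polynomial" "HOL-Computational_Algebra.Primes"
begin

text \<open>The ambient field 'a plays the role of F_{q^2}; F_q is its subfield {x. x^q = x}.\<close>
definition Fq :: "nat \<Rightarrow> 'a::field set" where
  "Fq q = {x. x ^ q = x}"

definition over_Fq :: "nat \<Rightarrow> 'a::field poly \<Rightarrow> bool" where
  "over_Fq q p = (\<forall>i. coeff p i \<in> Fq q)"

text \<open>R_n: reduced representatives a_0 + ... + a_{n-1} X^{n-1} with coefficients in F_q.\<close>
definition Rn :: "nat \<Rightarrow> nat \<Rightarrow> 'a::field poly set" where
  "Rn q n = {p. over_Fq q p \<and> degree p < n}"

definition xn1 :: "nat \<Rightarrow> 'a::field poly" where
  "xn1 n = monom 1 n - 1"

text \<open>Subsets of Z_n are represented by sets of representatives in {0..<n}.\<close>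
definition mu_invariant :: "nat \<Rightarrow> nat \<Rightarrow> nat set \<Rightarrow> bool" where
  "mu_invariant q n P = ((\<lambda>i. (q * i) mod n) ` P = P)"

definition fP :: "'a::field \<Rightarrow> nat set \<Rightarrow> 'a poly" where
  "fP \<theta> P = (\<Prod>i\<in>P. [:- (\<theta> ^ i), 1:])"

definition CP :: "nat \<Rightarrow> nat \<Rightarrow> 'a::field \<Rightarrow> nat set \<Rightarrow> 'a poly set" where
  "CP q n \<theta> P = {(a * (xn1 n div fP \<theta> P)) mod xn1 n | a. over_Fq q a}"

definition dual :: "nat \<Rightarrow> nat \<Rightarrow> 'a::field poly set \<Rightarrow> 'a poly set" where
  "dual q n C = {v \<in> Rn q n. \<forall>c\<in>C. (\<Sum>i<n. coeff c i * coeff v i) = 0}"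

text \<open>phi_{s,t} with k = s^{-1} a positive integer: a(X) |-> a(theta^{-t} X^k) mod (X^n - 1).\<close>
definition phi :: "nat \<Rightarrow> 'a::field \<Rightarrow> nat \<Rightarrow> nat \<Rightarrow> 'a poly \<Rightarrow> 'a poly" where
  "phi n \<theta> k t a = pcompose a (monom (inverse (\<theta> ^ t)) k) mod xn1 n"

text \<open>s ranges over Z_n^*, equivalently its inverse k ranges over positive integers coprime to n.\<close>
definition iso_self_dual :: "nat \<Rightarrow> nat \<Rightarrow> 'a::field \<Rightarrow> 'a poly set \<Rightarrow> bool" where
  "iso_self_dual q n \<theta> C =
    (\<exists>k t. 0 < k \<and> coprime k n \<and> t < n \<and> (q * t) mod n = t mod n \<and>
           phi n \<theta> k t ` C = dual q n C)"

definition weight :: "nat \<Rightarrow> 'a::zero poly \<Rightarrow> nat" where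
  "weight n c = card {i. i < n \<and> coeff c i \<noteq> 0}"

end

theory Submission
  imports Defs "HOL-Library.FuncSet"
begin

text \<open>
  Write \<open>\<omega> i = \<theta>\<^sup>i\<close> and \<open>Z = {l+1..3l+1}\<close>, so that \<open>P \<union> Z\<close> is a full residue system
  modulo \<open>n\<close> and \<open>X\<^sup>n - 1 = \<Prod>i\<in>P \<union> Z. (X - \<omega> i)\<close>. Then \<open>C\<^sub>P\<close> consists of the words of
  \<open>R\<^sub>n\<close> vanishing at \<open>\<omega> i\<close> for all \<open>i \<in> Z\<close>, i.e. the multiples of degree \<open>< n\<close> of
  \<open>g = \<Prod>i\<in>Z. (X - \<omega> i)\<close>; the polynomial \<open>g\<close> is defined over \<open>F\<^sub>q\<close> because Frobenius maps
  \<open>\<omega> i\<close> to \<open>\<omega> (-i)\<close> and \<open>Z = -Z\<close> modulo \<open>n\<close>. The discrete Fourier transform over the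
  \<open>n\<close>-th roots of unity (note \<open>n = 1\<close> in the field) identifies these words with the
  generalized Reed-Solomon words built from message polynomials of degree \<open>< k = (q+1)/2\<close>;
  such a polynomial has at most \<open>k - 1\<close> roots, so nonzero codewords have weight at least
  \<open>k + 1\<close>, which \<open>g\<close> attains.

  As \<open>\<theta>\<^sup>k = -1\<close>, the map \<open>\<phi>\<close> turns evaluation at \<open>\<omega> i\<close> into evaluation at \<open>\<omega> (k - i)\<close>,
  so it maps the words vanishing on \<open>Z\<close> onto those vanishing on \<open>k - Z = P\<close>. These are
  orthogonal to \<open>C\<^sub>P\<close> by Parseval's identity. Conversely, for \<open>t \<in> P\<close> the word with
  coefficients \<open>\<beta> \<omega>(t j) + \<beta>\<^sup>q \<omega>(-t j)\<close> lies in \<open>C\<^sub>P\<close>, and its inner product with a word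
  \<open>v\<close> over \<open>F\<^sub>q\<close> is the trace \<open>x + x\<^sup>q\<close> of \<open>x = \<beta> v(\<omega> t)\<close>; the trace is not identically
  zero, so every word of the dual vanishes on \<open>P\<close>.
\<close>

section \<open>Finite fields and polynomials\<close>

lemma power_card_UNIV_eq_self:
  fixes x :: "'a::{field,finite}"
  shows "x ^ card (UNIV :: 'a set) = x"
proof -
  have card_pos: "0 < card (UNIV :: 'a set)" by (rule finite_UNIV_card_ge_0) simp
  show ?thesis
  proof (cases "x = 0")
    case False
    let ?U = "UNIV - {0::'a}"
    have "(\<Prod>y\<in>?U. x * y) = \<Prod>?U"
      by (rule prod.reindex_bij_witness[of _ "\<lambda>y. y / x" "\<lambda>y. x * y"]) (use False in auto)
    hence "x ^ card ?U * \<Prod>?U = 1 * \<Prod>?U"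
      by (simp only: prod.distrib prod_constant mult_1_left)
    moreover have "\<Prod>?U \<noteq> 0" by simp
    ultimately have "x ^ card ?U = 1" by (rule mult_right_cancel[THEN iffD1, rotated])
    moreover have "card (UNIV :: 'a set) = Suc (card ?U)"
      using card_pos by (subst card_Diff_singleton) auto
    ultimately show ?thesis by (metis mult_1_right power_Suc)
  qed (use card_pos in \<open>simp add: power_0_left\<close>)
qed

lemma CHAR_dvd_card_UNIV: "CHAR('a::{field,finite}) dvd card (UNIV :: 'a set)"
proof -
  have "(\<Sum>y\<in>(UNIV :: 'a set). 1 + y) = (\<Sum>y\<in>UNIV. y)"
    by (rule sum.reindex_bij_witness[of _ "\<lambda>y. y - 1" "\<lambda>y. 1 + y"]) auto
  hence "of_nat (card (UNIV :: 'a set)) = (0::'a)" by (simp add: sum.distrib)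
  thus ?thesis by (simp only: of_nat_eq_0_iff_char_dvd)
qed

lemma CHAR_eq_if_card_UNIV_eq_power:
  assumes "card (UNIV :: 'a::{field,finite} set) = p ^ e" "prime p" "0 < e"
  shows "CHAR('a) = p"
proof -
  have "prime CHAR('a)"
    using finite_imp_CHAR_pos[where ?'a='a] prime_CHAR_semidom by auto
  moreover have "CHAR('a) dvd p ^ e" using CHAR_dvd_card_UNIV[where ?'a='a] assms(1) by simp
  ultimately show ?thesis using assms(2) prime_dvd_power primes_dvd_imp_eq by blast
qed

lemma int_eq_if_dvd_diff:
  fixes a b m :: int
  assumes "\<bar>a - b\<bar> < m" "m dvd a - b"
  shows "a = b"
  using dvd_imp_le_int[of "a - b" m] assms by auto

lemma poly_eq_sum_lessThan:
  fixes p :: "'a::comm_semiring_1 poly"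
  assumes "degree p < N"
  shows "poly p x = (\<Sum>j<N. coeff p j * x ^ j)"
proof -
  have "poly p x = (\<Sum>j\<le>degree p. coeff p j * x ^ j)" by (rule poly_altdef)
  also have "\<dots> = (\<Sum>j<N. coeff p j * x ^ j)"
    by (rule sum.mono_neutral_left) (use assms in \<open>auto simp: coeff_eq_0\<close>)
  finally show ?thesis .
qed

lemma degree_xn1 [simp]: "0 < n \<Longrightarrow> degree (xn1 n :: 'a::field poly) = n"
  unfolding xn1_def diff_conv_add_uminus by (subst degree_add_eq_left) (simp_all add: degree_monom_eq)

lemma card_power_eq_poly_le:
  fixes p :: "'a::idom poly"
  assumes "degree p < d"
  shows "card {x. x ^ d = poly p x} \<le> d"
proof -
  let ?r = "monom 1 d - p"
  have "coeff ?r d = 1" using assms by (simp add: coeff_eq_0)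
  hence "?r \<noteq> 0" by auto
  moreover have "degree ?r \<le> d"
    using assms by (intro degree_diff_le) (simp_all add: degree_monom_le)
  moreover have "{x. x ^ d = poly p x} = {x. poly ?r x = 0}" by (simp add: poly_monom)
  ultimately show ?thesis using card_poly_roots_bound[of ?r] by simp
qed

lemma xn1_nonzero: "0 < n \<Longrightarrow> xn1 n \<noteq> (0 :: 'a::field poly)"
  by (metis degree_0 degree_xn1 less_irrefl)

section \<open>Roots of unity and the discrete Fourier transform\<close>

locale primitive_root_of_unity =
  fixes n :: nat and \<theta> :: "'a::field"
  assumes n_pos: "0 < n"
    and theta_power_n: "\<theta> ^ n = 1"
    and theta_power_ne_1: "\<And>j. 0 < j \<Longrightarrow> j < n \<Longrightarrow> \<theta> ^ j \<noteq> 1"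
begin

lemma theta_nonzero: "\<theta> \<noteq> 0"
  using theta_power_n n_pos by (auto simp: power_0_left)

definition \<omega> :: "int \<Rightarrow> 'a" where "\<omega> i = \<theta> powi i"

lemma omega_add: "\<omega> (a + b) = \<omega> a * \<omega> b"
  unfolding \<omega>_def using theta_nonzero by (simp add: power_int_add)

lemma omega_of_nat: "\<omega> (int j) = \<theta> ^ j"
  unfolding \<omega>_def by simp

lemma omega_nonzero: "\<omega> a \<noteq> 0"
  unfolding \<omega>_def using theta_nonzero by simp

lemma omega_power: "\<omega> a ^ j = \<omega> (a * int j)"
  unfolding \<omega>_def by (simp add: power_int_mult)

lemma inverse_theta_power: "inverse \<theta> ^ j = \<omega> (- int j)"
  unfolding \<omega>_def by (simp add: power_int_minus power_inverse)

lemma omega_eq_1_iff: "\<omega> a = 1 \<longleftrightarrow> int n dvd a"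
proof -
  define r where "r = nat (a mod int n)"
  have r: "int r = a mod int n" and "r < n"
    unfolding r_def using n_pos by (simp_all add: nat_less_iff)
  have "\<omega> (int n * (a div int n)) = 1"
    unfolding \<omega>_def by (simp add: power_int_mult theta_power_n)
  hence "\<omega> a = \<omega> (int r)"
    by (metis omega_add r mult_1_right mod_mult_div_eq add.commute)
  also have "\<dots> = \<theta> ^ r" by (rule omega_of_nat)
  finally have "\<omega> a = 1 \<longleftrightarrow> r = 0"
    using theta_power_ne_1[of r] \<open>r < n\<close> by (cases "r = 0") auto
  thus ?thesis by (simp add: dvd_eq_mod_eq_0 flip: r)
qed

lemma omega_eq_iff: "\<omega> a = \<omega> b \<longleftrightarrow> int n dvd a - b"
proof -
  have "\<omega> a = \<omega> (a - b) * \<omega> b" by (simp flip: omega_add)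
  hence "\<omega> a = \<omega> b \<longleftrightarrow> \<omega> (a - b) = 1" using omega_nonzero[of b] by auto
  thus ?thesis by (simp add: omega_eq_1_iff)
qed

lemma inj_on_omega: "inj_on \<omega> {a..<a + int n}"
  by (rule inj_onI) (auto simp: omega_eq_iff intro!: int_eq_if_dvd_diff[of _ _ "int n"])

lemma sum_omega_lessThan: "(\<Sum>j<n. \<omega> (t * int j)) = (if int n dvd t then of_nat n else 0)"
proof (cases "int n dvd t")
  case True
  hence "\<omega> (t * int j) = 1" for j by (simp add: omega_eq_1_iff)
  thus ?thesis using True by simp
next
  case False
  hence "\<omega> t \<noteq> 1" by (simp add: omega_eq_1_iff)
  hence "(\<Sum>j<n. \<omega> t ^ j) = (\<omega> t ^ n - 1) / (\<omega> t - 1)" by (rule geometric_sum)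
  also have "\<omega> t ^ n = 1" by (simp add: omega_power omega_eq_1_iff)
  finally show ?thesis using False by (simp add: omega_power)
qed

lemma sum_omega_interval:
  "(\<Sum>s\<in>{a..<a + int n}. \<omega> (s * t)) = (if int n dvd t then of_nat n else 0)"
proof -
  have "(\<Sum>s\<in>{a..<a + int n}. \<omega> (s * t)) = (\<Sum>j<n. \<omega> ((a + int j) * t))"
    by (rule sum.reindex_bij_witness[of _ "\<lambda>j. a + int j" "\<lambda>s. nat (s - a)"]) auto
  also have "\<dots> = \<omega> (a * t) * (\<Sum>j<n. \<omega> (t * int j))"
    by (simp add: sum_distrib_left omega_add[symmetric] algebra_simps)
  finally show ?thesis by (auto simp: sum_omega_lessThan omega_eq_1_iff)
qed

lemma poly_omega: "degree c < n \<Longrightarrow> poly c (\<omega> t) = (\<Sum>j<n. coeff c j * \<omega> (t * int j))"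
  by (simp add: poly_eq_sum_lessThan omega_power)

lemma coeff_inverse_dft:
  assumes "degree c < n" "j < n"
  shows "of_nat n * coeff c j = (\<Sum>s\<in>{a..<a + int n}. poly c (\<omega> s) * \<omega> (- (s * int j)))"
proof -
  have "(\<Sum>s\<in>{a..<a + int n}. poly c (\<omega> s) * \<omega> (- (s * int j)))
      = (\<Sum>i<n. coeff c i * (\<Sum>s\<in>{a..<a + int n}. \<omega> (s * (int i - int j))))"
    unfolding poly_omega[OF assms(1)] sum_distrib_right sum_distrib_left
    by (subst sum.swap) (simp add: mult.assoc omega_add[symmetric] algebra_simps)
  also have "\<dots> = (\<Sum>i<n. if i = j then of_nat n * coeff c i else 0)"
  proof (rule sum.cong[OF refl])
    fix i assume "i \<in> {..<n}"
    hence "int n dvd int i - int j \<longleftrightarrow> i = j"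
      using assms(2) int_eq_if_dvd_diff[of "int i" "int j" "int n"] by auto
    thus "coeff c i * (\<Sum>s\<in>{a..<a + int n}. \<omega> (s * (int i - int j)))
        = (if i = j then of_nat n * coeff c i else 0)"
      by (simp add: sum_omega_interval)
  qed
  finally show ?thesis using assms(2) by simp
qed

lemma parseval:
  assumes "degree c < n" "degree v < n"
  shows "of_nat n * (\<Sum>j<n. coeff c j * coeff v j)
       = (\<Sum>s\<in>{a..<a + int n}. poly c (\<omega> s) * poly v (\<omega> (- s)))"
proof -
  have "(\<Sum>s\<in>{a..<a + int n}. poly c (\<omega> s) * poly v (\<omega> (- s)))
      = (\<Sum>j<n. coeff v j * (\<Sum>s\<in>{a..<a + int n}. poly c (\<omega> s) * \<omega> (- (s * int j))))"
    unfolding poly_omega[OF assms(2)] sum_distrib_left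
    by (subst sum.swap) (simp add: mult_ac)
  also have "\<dots> = (\<Sum>j<n. of_nat n * (coeff c j * coeff v j))"
    by (rule sum.cong) (simp_all add: coeff_inverse_dft[OF assms(1), symmetric] mult_ac)
  finally show ?thesis by (simp add: sum_distrib_left)
qed

lemma poly_eqI_omega:
  assumes "degree c < n" "degree v < n" "\<And>s. s \<in> {a..<a + int n} \<Longrightarrow> poly c (\<omega> s) = poly v (\<omega> s)"
  shows "c = v"
proof (rule poly_eqI_degree[where A = "\<omega> ` {a..<a + int n}"])
  show "degree c < card (\<omega> ` {a..<a + int n})" "degree v < card (\<omega> ` {a..<a + int n})"
    using assms(1,2) by (simp_all add: card_image[OF inj_on_omega])
qed (use assms(3) in auto)

lemma poly_xn1_omega: "poly (xn1 n) (\<omega> i) = 0"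
  by (simp add: xn1_def poly_monom omega_power omega_eq_1_iff)

lemma poly_mod_xn1_omega: "poly (c mod xn1 n) (\<omega> i) = poly c (\<omega> i)"
  by (metis div_mult_mod_eq poly_add poly_mult poly_xn1_omega mult_zero_right add_0)

definition root_poly :: "int set \<Rightarrow> 'a poly" where
  "root_poly S = (\<Prod>i\<in>S. [:- \<omega> i, 1:])"

lemma root_poly_nonzero: "root_poly S \<noteq> 0"
  unfolding root_poly_def by (cases "finite S") auto

lemma degree_root_poly: "finite S \<Longrightarrow> degree (root_poly S) = card S"
  unfolding root_poly_def by (subst degree_prod_eq_sum_degree) auto

lemma lead_coeff_root_poly: "lead_coeff (root_poly S) = 1"
  unfolding root_poly_def lead_coeff_prod by simp

lemma poly_root_poly: "poly (root_poly S) x = (\<Prod>i\<in>S. x - \<omega> i)"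
  unfolding root_poly_def poly_prod by simp

lemma poly_root_poly_eq_0: "finite S \<Longrightarrow> i \<in> S \<Longrightarrow> poly (root_poly S) (\<omega> i) = 0"
  unfolding poly_root_poly by (rule prod_zero) auto

lemma root_poly_dvd:
  assumes "finite S" "inj_on \<omega> S" "\<And>i. i \<in> S \<Longrightarrow> poly c (\<omega> i) = 0"
  shows "root_poly S dvd c"
  using assms
proof (induction S rule: finite_induct)
  case empty
  then show ?case by (simp add: root_poly_def)
next
  case (insert j S)
  then obtain d where d: "c = root_poly S * d" by (auto elim: dvdE)
  have "poly (root_poly S) (\<omega> j) \<noteq> 0"
    using insert(1,2,4) by (auto simp: poly_root_poly prod_zero_iff dest: inj_onD)
  hence "poly d (\<omega> j) = 0" using insert(5)[of j] d by simp
  hence "[:- \<omega> j, 1:] dvd d" by (simp add: poly_eq_0_iff_dvd)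
  hence "[:- \<omega> j, 1:] * root_poly S dvd c" unfolding d by (metis mult.commute mult_dvd_mono dvd_refl)
  thus ?case using insert(1,2) by (simp add: root_poly_def)
qed

lemma xn1_eq_root_poly: "xn1 n = root_poly {a..<a + int n}"
proof (rule poly_eqI_degree_lead_coeff[where n = n and A = "\<omega> ` {a..<a + int n}"])
  show "coeff (xn1 n) n = coeff (root_poly {a..<a + int n}) n"
    using lead_coeff_root_poly[of "{a..<a + int n}"] n_pos
    by (simp add: degree_root_poly xn1_def)
qed (use n_pos in \<open>auto simp: card_image[OF inj_on_omega] degree_root_poly
                               poly_xn1_omega poly_root_poly_eq_0\<close>)

end

section \<open>The code \<open>C\<^sub>P\<close>\<close>

locale cyclic_code_setting = primitive_root_of_unity n \<theta>
  for n :: nat and \<theta> :: "'a::{field,finite}" +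
  fixes q l k :: nat
  assumes q_prime_power: "\<exists>p m. prime p \<and> 0 < m \<and> q = p ^ m"
    and card_UNIV: "card (UNIV :: 'a set) = q ^ 2"
    and q_eq: "q = 4 * l + 1"
    and n_eq: "n = q + 1"
    and k_eq: "k = 2 * l + 1"
begin

lemma q_gt_1: "1 < q"
proof -
  obtain p m where "prime p" "0 < m" "q = p ^ m" using q_prime_power by blast
  thus ?thesis using prime_ge_2_nat[of p] power_increasing[of 1 m p] by simp
qed

lemma q_nonzero: "q \<noteq> 0"
  using q_gt_1 by simp

lemma n_eq_2k: "n = 2 * k"
  using n_eq q_eq k_eq by simp

lemma q_eq_CHAR_power: obtains m where "prime CHAR('a)" "0 < m" "q = CHAR('a) ^ m"
proof -
  obtain p m where p: "prime p" "0 < m" "q = p ^ m" using q_prime_power by blast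
  have "CHAR('a) = p"
    using p card_UNIV by (intro CHAR_eq_if_card_UNIV_eq_power[of p "m * 2"]) (simp_all add: power_mult)
  with p that show ?thesis by blast
qed

lemma frobenius_add: "(x + y :: 'a) ^ q = x ^ q + y ^ q"
  by (rule q_eq_CHAR_power) (simp add: freshmans_dream')

lemma frobenius_sum: "sum (f :: 'b \<Rightarrow> 'a) A ^ q = (\<Sum>i\<in>A. f i ^ q)"
  by (rule q_eq_CHAR_power) (simp add: freshmans_dream_sum')

lemma frobenius_uminus: "(- x :: 'a) ^ q = - (x ^ q)"
proof -
  have "x ^ q + (- x) ^ q = 0" using frobenius_add[of x "- x"] q_nonzero by (simp add: power_0_left)
  thus ?thesis by (metis neg_eq_iff_add_eq_0)
qed

lemma frobenius_diff: "(x - y :: 'a) ^ q = x ^ q - y ^ q"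
  using frobenius_add[of x "- y"] by (simp add: frobenius_uminus)

lemma frobenius_frobenius: "((x :: 'a) ^ q) ^ q = x"
  using power_card_UNIV_eq_self[of x] card_UNIV by (simp add: power_mult power2_eq_square)

lemma of_nat_n: "of_nat n = (1 :: 'a)"
proof (rule q_eq_CHAR_power)
  fix m assume "0 < m" "q = CHAR('a) ^ m"
  hence "of_nat q = (0 :: 'a)" by (simp add: of_nat_eq_0_iff_char_dvd)
  thus ?thesis by (simp add: n_eq)
qed

lemma over_Fq_add: "over_Fq q a \<Longrightarrow> over_Fq q b \<Longrightarrow> over_Fq q (a + b :: 'a poly)"
  by (simp add: over_Fq_def Fq_def frobenius_add)

lemma over_Fq_diff: "over_Fq q a \<Longrightarrow> over_Fq q b \<Longrightarrow> over_Fq q (a - b :: 'a poly)"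
  by (simp add: over_Fq_def Fq_def frobenius_diff)

lemma over_Fq_mult: "over_Fq q a \<Longrightarrow> over_Fq q b \<Longrightarrow> over_Fq q (a * b :: 'a poly)"
  by (simp add: over_Fq_def Fq_def coeff_mult frobenius_sum power_mult_distrib)

lemma over_Fq_monom: "c ^ q = c \<Longrightarrow> over_Fq q (monom c j :: 'a poly)"
  using q_nonzero by (simp add: over_Fq_def Fq_def coeff_monom power_0_left)

lemma over_Fq_one: "over_Fq q (1 :: 'a poly)"
  using q_nonzero by (simp add: over_Fq_def Fq_def power_0_left)

lemma over_Fq_xn1: "over_Fq q (xn1 n :: 'a poly)"
  by (simp add: xn1_def over_Fq_diff over_Fq_monom over_Fq_one)

lemma over_Fq_pCons: "over_Fq q (pCons c a) \<longleftrightarrow> c ^ q = c \<and> over_Fq q (a :: 'a poly)"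
  using q_nonzero by (auto simp: over_Fq_def Fq_def coeff_pCons power_0_left split: nat.splits)

lemma over_Fq_pcompose:
  "over_Fq q (a :: 'a poly) \<Longrightarrow> over_Fq q b \<Longrightarrow> over_Fq q (pcompose a b)"
  by (induction a rule: pCons_induct)
     (auto simp: over_Fq_pCons pcompose_pCons monom_0[symmetric]
           intro!: over_Fq_add over_Fq_mult over_Fq_monom)

definition frob :: "'a poly \<Rightarrow> 'a poly" where
  "frob u = map_poly (\<lambda>x. x ^ q) u"

lemma coeff_frob: "coeff (frob u) i = coeff u i ^ q"
  unfolding frob_def using q_nonzero by (simp add: coeff_map_poly)

lemma over_Fq_iff_frob: "over_Fq q u \<longleftrightarrow> frob u = u"
  by (auto simp: over_Fq_def Fq_def poly_eq_iff coeff_frob)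

lemma frob_add: "frob (u + v) = frob u + frob v"
  by (rule poly_eqI) (simp add: coeff_frob frobenius_add)

lemma frob_mult: "frob (u * v) = frob u * frob v"
  by (rule poly_eqI) (simp add: coeff_frob coeff_mult frobenius_sum power_mult_distrib)

lemma frob_prod: "frob (prod f A) = (\<Prod>i\<in>A. frob (f i))"
  by (induction A rule: infinite_finite_induct) (simp_all add: frob_mult frob_def[of 1])

lemma degree_frob: "degree (frob u) = degree u"
  unfolding frob_def using q_nonzero by (intro degree_map_poly) simp

text \<open>\<open>frob\<close> is a degree-preserving ring endomorphism, so by uniqueness of Euclidean division
  it fixes quotient and remainder of polynomials it fixes.\<close>

lemma over_Fq_div_mod:
  assumes "over_Fq q (a :: 'a poly)" "over_Fq q b"
  shows "over_Fq q (a div b)" "over_Fq q (a mod b)"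
proof -
  have "(a div b, a mod b) = (frob (a div b), frob (a mod b))"
  proof (induction rule: euclidean_relation_polyI)
    case by0
    then show ?case using assms(1) by (simp add: over_Fq_iff_frob frob_def)
  next
    case divides
    then show ?case
      using assms frob_mult[of "a div b" b] by (simp add: over_Fq_iff_frob frob_def)
  next
    case euclidean_relation
    then show ?case
      using assms frob_mult[of "a div b" b] frob_add[of "a div b * b" "a mod b"]
      by (simp add: over_Fq_iff_frob degree_frob degree_mod_less' dvd_eq_mod_eq_0)
  qed
  thus "over_Fq q (a div b)" "over_Fq q (a mod b)" by (simp_all add: over_Fq_iff_frob)
qed

lemma poly_frobenius: "over_Fq q v \<Longrightarrow> poly v x ^ q = poly v (x ^ q :: 'a)"
  by (simp add: over_Fq_def Fq_def poly_altdef frobenius_sum power_mult_distrib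
                flip: power_mult mult.commute)

text \<open>The lower bound counts fibres of the norm \<open>x \<mapsto> x\<^sup>q\<^sup>+\<^sup>1\<close>, which maps the nonzero elements
  into \<open>Fq q - {0}\<close> with fibres of size at most \<open>q + 1\<close>.\<close>

lemma card_Fq: "card (Fq q :: 'a set) = q"
proof (rule antisym)
  have "Fq q = {x :: 'a. x ^ q = poly [:0, 1:] x}" by (simp add: Fq_def)
  thus "card (Fq q :: 'a set) \<le> q"
    using card_power_eq_poly_le[of "[:0, 1 :: 'a:]" q] q_gt_1 by simp
next
  define F where "F = (Fq q :: 'a set) - {0}"
  have "x ^ (q + 1) \<in> F" if "x \<noteq> 0" for x :: 'a
  proof -
    have "(x ^ (q + 1)) ^ q = (x ^ q) ^ q * x ^ q"
      by (simp add: power_add power_mult_distrib)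
    thus ?thesis using that by (simp add: F_def Fq_def frobenius_frobenius)
  qed
  hence "UNIV - {0} \<subseteq> (\<Union>y\<in>F. {x :: 'a. x ^ (q + 1) = poly [:y:] x})" by auto
  hence "card (UNIV - {0 :: 'a}) \<le> card (\<Union>y\<in>F. {x :: 'a. x ^ (q + 1) = poly [:y:] x})"
    by (intro card_mono) simp_all
  also have "\<dots> \<le> (\<Sum>y\<in>F. card {x :: 'a. x ^ (q + 1) = poly [:y:] x})"
    by (rule card_UN_le) simp
  also have "\<dots> \<le> (\<Sum>y\<in>F. q + 1)"
    by (intro sum_mono card_power_eq_poly_le) simp
  also have "\<dots> = card F * (q + 1)" by simp
  finally have "(q - 1) * (q + 1) \<le> card F * (q + 1)"
    using card_UNIV by (simp add: card_Diff_singleton power2_eq_square algebra_simps)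
  hence "q - 1 \<le> card F" by (simp only: mult_le_cancel2)
  moreover have "card F = card (Fq q :: 'a set) - 1" "0 \<in> (Fq q :: 'a set)"
    using q_gt_1 by (simp_all add: F_def Fq_def card_Diff_singleton power_0_left)
  ultimately show "q \<le> card (Fq q :: 'a set)"
    using card_gt_0_iff[of "Fq q :: 'a set"] by fastforce
qed

lemma trace_nonzero: "\<exists>x :: 'a. x + x ^ q \<noteq> 0"
proof (rule ccontr)
  assume "\<not> ?thesis"
  hence "{x :: 'a. x ^ q = poly [:0, -1:] x} = UNIV" by (auto simp: eq_neg_iff_add_eq_0 add.commute)
  hence "q ^ 2 \<le> q" using card_power_eq_poly_le[of "[:0, -1 :: 'a:]" q] card_UNIV q_gt_1 by simp
  thus False using q_gt_1 by (simp add: power2_eq_square)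
qed

lemma card_polys_below:
  assumes "0 < d"
  shows "card {a :: 'a poly. over_Fq q a \<and> degree a < d} = q ^ d"
proof -
  let ?A = "{a :: 'a poly. over_Fq q a \<and> degree a < d}"
  have "bij_betw (\<lambda>a. restrict (coeff a) {..<d}) ?A ({..<d} \<rightarrow>\<^sub>E Fq q)"
  proof (rule bij_betw_byWitness[where f' = "\<lambda>f. \<Sum>j<d. monom (f j) j"])
    show "\<forall>a\<in>?A. (\<Sum>j<d. monom (restrict (coeff a) {..<d} j) j) = a"
      by (auto intro!: poly_eqI simp: coeff_sum coeff_monom coeff_eq_0)
    show "\<forall>f\<in>{..<d} \<rightarrow>\<^sub>E Fq q. restrict (coeff (\<Sum>j<d. monom (f j) j)) {..<d} = f"
    proof
      fix f assume "f \<in> {..<d} \<rightarrow>\<^sub>E Fq q"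
      moreover have "restrict (coeff (\<Sum>j<d. monom (f j) j)) {..<d} = restrict f {..<d}"
        by (rule restrict_ext) (simp add: coeff_sum coeff_monom)
      ultimately show "restrict (coeff (\<Sum>j<d. monom (f j) j)) {..<d} = f"
        by (simp add: PiE_restrict)
    qed
    show "(\<lambda>a. restrict (coeff a) {..<d}) ` ?A \<subseteq> {..<d} \<rightarrow>\<^sub>E Fq q"
      by (intro image_subsetI) (simp add: over_Fq_def restrict_PiE_iff)
    show "(\<lambda>f. \<Sum>j<d. monom (f j) j) ` ({..<d} \<rightarrow>\<^sub>E Fq q) \<subseteq> ?A"
    proof safe
      fix f assume f: "f \<in> {..<d} \<rightarrow>\<^sub>E Fq q"
      show "over_Fq q (\<Sum>j<d. monom (f j) j)"
        using f q_nonzero by (auto simp: over_Fq_def Fq_def coeff_sum coeff_monom power_0_left)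
      have "degree (\<Sum>j<d. monom (f j) j) \<le> d - 1"
        by (intro degree_sum_le) (auto intro: order_trans[OF degree_monom_le])
      thus "degree (\<Sum>j<d. monom (f j) j) < d" using assms by simp
    qed
  qed
  hence "card ?A = card ({..<d} \<rightarrow>\<^sub>E (Fq q :: 'a set))" by (rule bij_betw_same_card)
  thus ?thesis by (simp add: card_PiE card_Fq)
qed

lemma frobenius_omega: "\<omega> a ^ q = \<omega> (- a)"
proof -
  have "a * int q - - a = int n * a" using n_eq by (simp add: algebra_simps)
  thus ?thesis by (simp add: omega_power omega_eq_iff)
qed

lemma over_Fq_root_poly:
  assumes "(\<lambda>i. int n - i) ` S = S"
  shows "over_Fq q (root_poly S)"
proof -
  have "frob (root_poly S) = (\<Prod>i\<in>S. [:- \<omega> (int n - i), 1:])"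
  proof -
    have "frob [:- \<omega> i, 1:] = [:- \<omega> (int n - i), 1:]" for i
    proof -
      have "\<omega> (- i) = \<omega> (int n - i)" by (simp add: omega_eq_iff)
      thus ?thesis
        by (intro poly_eqI) (simp add: coeff_frob coeff_pCons frobenius_uminus frobenius_omega
                               q_nonzero power_0_left split: nat.split)
    qed
    thus ?thesis by (simp add: root_poly_def frob_prod)
  qed
  also have "\<dots> = (\<Prod>i\<in>(\<lambda>i. int n - i) ` S. [:- \<omega> i, 1:])"
    by (subst prod.reindex) (auto intro: inj_onI)
  finally show ?thesis using assms by (simp add: over_Fq_iff_frob root_poly_def)
qed

definition P :: "int set" where "P = {- int l .. int l}"
definition Z :: "int set" where "Z = {int l + 1 .. 3 * int l + 1}"

lemma P_Un_Z: "P \<union> Z = {- int l ..< - int l + int n}"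
  using n_eq q_eq unfolding P_def Z_def by auto

lemma P_Int_Z: "P \<inter> Z = {}"
  unfolding P_def Z_def by auto

lemma finite_P [simp]: "finite P" and finite_Z [simp]: "finite Z"
  unfolding P_def Z_def by simp_all

lemma inj_on_omega_P_Un_Z: "inj_on \<omega> (P \<union> Z)"
  unfolding P_Un_Z by (rule inj_on_omega)

definition gen_poly :: "'a poly" where "gen_poly = root_poly Z"

lemma gen_poly_nonzero: "gen_poly \<noteq> 0"
  by (simp add: gen_poly_def root_poly_nonzero)

lemma degree_gen_poly: "degree gen_poly = k"
  using k_eq by (simp add: gen_poly_def degree_root_poly Z_def)

lemma over_Fq_gen_poly: "over_Fq q gen_poly"
  unfolding gen_poly_def
proof (rule over_Fq_root_poly)
  have "(\<lambda>i. int n - i) ` Z \<subseteq> Z" using n_eq q_eq by (auto simp: Z_def)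
  moreover have "Z \<subseteq> (\<lambda>i. int n - i) ` Z"
    using n_eq q_eq by (auto simp: Z_def intro!: image_eqI[where x = "int n - _"])
  ultimately show "(\<lambda>i. int n - i) ` Z = Z" by blast
qed

lemma xn1_eq_root_poly_P_gen_poly: "xn1 n = root_poly P * gen_poly"
proof -
  have "xn1 n = root_poly (P \<union> Z)" by (simp only: P_Un_Z xn1_eq_root_poly)
  thus ?thesis using P_Int_Z by (simp add: gen_poly_def root_poly_def prod.union_disjoint)
qed

abbreviation P_mod_n :: "nat set" where "P_mod_n \<equiv> (\<lambda>i. nat (i mod int n)) ` P"

lemma fP_P_mod_n: "fP \<theta> P_mod_n = root_poly P"
proof -
  have "inj_on (\<lambda>i. nat (i mod int n)) P"
  proof (rule inj_onI)
    fix a b assume "a \<in> P" "b \<in> P" "nat (a mod int n) = nat (b mod int n)"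
    moreover from this have "int n dvd a - b"
      using n_pos by (simp add: eq_nat_nat_iff mod_eq_dvd_iff)
    ultimately show "a = b" using n_eq q_eq by (intro int_eq_if_dvd_diff) (auto simp: P_def)
  qed
  moreover have "\<theta> ^ nat (i mod int n) = \<omega> i" for i
    using n_pos by (simp add: omega_of_nat[symmetric] omega_eq_iff mod_eq_dvd_iff[symmetric])
  ultimately show ?thesis by (simp add: fP_def root_poly_def prod.reindex)
qed

lemma xn1_div_fP: "xn1 n div fP \<theta> P_mod_n = gen_poly"
  by (simp add: fP_P_mod_n xn1_eq_root_poly_P_gen_poly root_poly_nonzero)

definition vanishing :: "int set \<Rightarrow> 'a poly set" where
  "vanishing S = {c \<in> Rn q n. \<forall>i\<in>S. poly c (\<omega> i) = 0}"

lemma vanishing_Z_eq_gen_poly_multiples: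
  "vanishing Z = (\<lambda>a. a * gen_poly) ` {a. over_Fq q a \<and> degree a < k}"
proof (intro equalityI subsetI)
  fix c assume c: "c \<in> vanishing Z"
  hence "gen_poly dvd c" unfolding gen_poly_def vanishing_def
    by (intro root_poly_dvd) (auto intro: inj_on_subset[OF inj_on_omega_P_Un_Z])
  then obtain a where a: "c = a * gen_poly" by (metis dvdE mult.commute)
  have "over_Fq q a"
    using c over_Fq_div_mod(1)[of c gen_poly] over_Fq_gen_poly gen_poly_nonzero
    by (simp add: a vanishing_def Rn_def)
  moreover have "degree a < k"
  proof (cases "a = 0")
    case False
    hence "degree c = degree a + k" by (simp add: a degree_mult_eq gen_poly_nonzero degree_gen_poly)
    moreover have "degree c < n" using c by (simp add: vanishing_def Rn_def)
    ultimately show ?thesis using n_eq_2k by simp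
  qed (use k_eq in simp)
  ultimately show "c \<in> (\<lambda>a. a * gen_poly) ` {a. over_Fq q a \<and> degree a < k}" using a by blast
next
  fix c assume "c \<in> (\<lambda>a. a * gen_poly) ` {a. over_Fq q a \<and> degree a < k}"
  then obtain a where a: "c = a * gen_poly" "over_Fq q a" "degree a < k" by blast
  have "degree c < n"
    using a n_eq_2k n_pos by (cases "a = 0") (simp_all add: degree_mult_eq gen_poly_nonzero degree_gen_poly)
  thus "c \<in> vanishing Z"
    using a over_Fq_mult[OF a(2) over_Fq_gen_poly]
    by (simp add: vanishing_def Rn_def gen_poly_def poly_root_poly_eq_0)
qed

lemma CP_eq_vanishing_Z: "CP q n \<theta> P_mod_n = vanishing Z"
proof (intro equalityI subsetI)
  fix c assume "c \<in> CP q n \<theta> P_mod_n"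
  then obtain a where c: "c = (a * gen_poly) mod xn1 n" and a: "over_Fq q a"
    unfolding CP_def xn1_div_fP by blast
  have "over_Fq q c"
    unfolding c by (intro over_Fq_div_mod over_Fq_mult a over_Fq_gen_poly over_Fq_xn1)
  moreover have "degree c < n"
    using xn1_nonzero[OF n_pos] degree_mod_less'[of "xn1 n" "a * gen_poly"] n_pos
    by (cases "c = 0") (simp_all add: c)
  ultimately show "c \<in> vanishing Z"
    by (simp add: vanishing_def Rn_def c poly_mod_xn1_omega gen_poly_def poly_root_poly_eq_0)
next
  fix c assume "c \<in> vanishing Z"
  then obtain a where a: "c = a * gen_poly" "over_Fq q a"
    unfolding vanishing_Z_eq_gen_poly_multiples by blast
  have "degree c < n" using \<open>c \<in> vanishing Z\<close> by (simp add: vanishing_def Rn_def)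
  hence "c = (a * gen_poly) mod xn1 n" using a(1) n_pos by (simp add: mod_poly_less)
  thus "c \<in> CP q n \<theta> P_mod_n" using a(2) unfolding CP_def xn1_div_fP by blast
qed

lemma card_vanishing_Z: "card (vanishing Z) = q ^ k"
proof -
  have "inj_on (\<lambda>a. a * gen_poly) {a. over_Fq q a \<and> degree a < k}"
    using gen_poly_nonzero by (auto intro: inj_onI)
  thus ?thesis unfolding vanishing_Z_eq_gen_poly_multiples using k_eq by (simp add: card_image card_polys_below)
qed

subsection \<open>Alternant description and minimum distance\<close>

definition alternant :: "'a poly set" where
  "alternant = {c \<in> Rn q n. \<exists>a :: 'a poly. degree a < k \<and>
                  (\<forall>j<n. coeff c j = \<theta> ^ (j * l) * poly a (inverse \<theta> ^ j))}"

lemma alternant_coeff: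
  assumes "degree a < k"
  shows "\<theta> ^ (j * l) * poly a (inverse \<theta> ^ j) = (\<Sum>m<k. coeff a m * \<omega> (int j * (int l - int m)))"
proof -
  have "\<omega> (int (j * l)) * \<omega> (- int j) ^ m = \<omega> (int j * (int l - int m))" for m
    by (simp add: omega_power omega_add[symmetric] algebra_simps)
  thus ?thesis
    by (simp add: omega_of_nat[symmetric] inverse_theta_power poly_eq_sum_lessThan[OF assms]
                  sum_distrib_left mult.left_commute)
qed

lemma alternant_subset_vanishing_Z: "alternant \<subseteq> vanishing Z"
proof
  fix c assume "c \<in> alternant"
  then obtain a where c: "c \<in> Rn q n" and a: "degree a < k"
    and coeff_c: "\<And>j. j < n \<Longrightarrow> coeff c j = (\<Sum>m<k. coeff a m * \<omega> (int j * (int l - int m)))"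
    unfolding alternant_def by (auto simp: alternant_coeff)
  have "poly c (\<omega> i) = 0" if i: "i \<in> Z" for i
  proof -
    have "degree c < n" using c by (simp add: Rn_def)
    hence "poly c (\<omega> i) = (\<Sum>j<n. (\<Sum>m<k. coeff a m * \<omega> (int j * (int l - int m))) * \<omega> (i * int j))"
      by (simp add: poly_omega coeff_c)
    also have "\<dots> = (\<Sum>j<n. \<Sum>m<k. coeff a m * \<omega> ((int l - int m + i) * int j))"
      unfolding sum_distrib_right
      by (intro sum.cong refl) (simp add: mult.assoc omega_add[symmetric] algebra_simps)
    also have "\<dots> = (\<Sum>m<k. coeff a m * (\<Sum>j<n. \<omega> ((int l - int m + i) * int j)))"
      by (subst sum.swap) (simp add: sum_distrib_left)
    also have "\<dots> = 0"
    proof (rule sum.neutral, rule ballI)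
      fix m assume "m \<in> {..<k}"
      hence "0 < int l - int m + i" "int l - int m + i < int n"
        using i k_eq n_eq q_eq unfolding Z_def by auto
      hence "\<not> int n dvd int l - int m + i" using zdvd_imp_le by fastforce
      thus "coeff a m * (\<Sum>j<n. \<omega> ((int l - int m + i) * int j)) = 0" by (simp add: sum_omega_lessThan)
    qed
    finally show ?thesis .
  qed
  thus "c \<in> vanishing Z" using c by (simp add: vanishing_def)
qed

lemma vanishing_Z_subset_alternant: "vanishing Z \<subseteq> alternant"
proof
  fix c assume "c \<in> vanishing Z"
  hence c: "c \<in> Rn q n" "degree c < n" and zero: "\<And>i. i \<in> Z \<Longrightarrow> poly c (\<omega> i) = 0"
    by (auto simp: vanishing_def Rn_def)
  \<comment> \<open>by Fourier inversion, the message polynomial lists the values of \<open>c\<close> on \<open>\<omega> ` P\<close>\<close>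
  define a where "a = (\<Sum>m<k. monom (poly c (\<omega> (int m - int l))) m)"
  have coeff_a: "coeff a m = (if m < k then poly c (\<omega> (int m - int l)) else 0)" for m
    by (simp add: a_def coeff_sum coeff_monom)
  have "degree a < k"
    using k_eq by (intro degree_lessI) (auto simp: coeff_a)
  moreover have "coeff c j = \<theta> ^ (j * l) * poly a (inverse \<theta> ^ j)" if j: "j < n" for j
  proof -
    have "coeff c j = (\<Sum>s\<in>P \<union> Z. poly c (\<omega> s) * \<omega> (- (s * int j)))"
      using coeff_inverse_dft[OF c(2) j, of "- int l"] by (simp add: of_nat_n P_Un_Z)
    also have "\<dots> = (\<Sum>s\<in>P. poly c (\<omega> s) * \<omega> (- (s * int j)))"
      using P_Int_Z zero by (simp add: sum.union_disjoint)
    also have "\<dots> = (\<Sum>m<k. coeff a m * \<omega> (int j * (int l - int m)))"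
      by (rule sum.reindex_bij_witness[of _ "\<lambda>m. int m - int l" "\<lambda>s. nat (s + int l)"])
         (use k_eq in \<open>auto simp: P_def coeff_a algebra_simps\<close>)
    also have "\<dots> = \<theta> ^ (j * l) * poly a (inverse \<theta> ^ j)"
      by (rule alternant_coeff[OF \<open>degree a < k\<close>, symmetric])
    finally show ?thesis .
  qed
  ultimately show "c \<in> alternant" using c(1) unfolding alternant_def by blast
qed

lemma vanishing_Z_eq_alternant: "vanishing Z = alternant"
  using alternant_subset_vanishing_Z vanishing_Z_subset_alternant by blast

lemma weight_ge_if_in_vanishing_Z:
  assumes "c \<in> vanishing Z" "c \<noteq> 0"
  shows "k + 1 \<le> weight n c"
proof -
  obtain a where c: "degree c < n" and a: "degree a < k"
    and coeff_c: "\<And>j. j < n \<Longrightarrow> coeff c j = \<theta> ^ (j * l) * poly a (inverse \<theta> ^ j)"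
    using assms(1) by (auto simp: vanishing_Z_eq_alternant alternant_def Rn_def)
  have "a \<noteq> 0"
  proof
    assume "a = 0"
    hence "coeff c j = 0" for j using c coeff_c by (cases "j < n") (simp_all add: coeff_eq_0)
    thus False using assms(2) by (simp add: poly_eq_iff)
  qed
  let ?zeros = "{j. j < n \<and> coeff c j = 0}"
  have "inj_on (\<lambda>j. inverse \<theta> ^ j) ?zeros"
  proof (rule inj_onI)
    fix i j assume "i \<in> ?zeros" "j \<in> ?zeros" "inverse \<theta> ^ i = inverse \<theta> ^ j"
    hence "int n dvd int j - int i" "\<bar>int j - int i\<bar> < int n"
      by (auto simp: inverse_theta_power omega_eq_iff)
    thus "i = j" using int_eq_if_dvd_diff by fastforce
  qed
  hence "card ?zeros = card ((\<lambda>j. inverse \<theta> ^ j) ` ?zeros)" by (rule card_image[symmetric])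
  also have "\<dots> \<le> card {x. poly a x = 0}"
    using coeff_c theta_nonzero \<open>a \<noteq> 0\<close> by (intro card_mono poly_roots_finite) auto
  also have "\<dots> \<le> k - 1" using card_poly_roots_bound[OF \<open>a \<noteq> 0\<close>] a by simp
  finally have "card ?zeros \<le> k - 1" .
  moreover have "weight n c + card ?zeros = n"
  proof -
    have "{j. j < n \<and> coeff c j \<noteq> 0} \<union> ?zeros = {..<n}" by auto
    thus ?thesis unfolding weight_def by (subst card_Un_disjoint[symmetric]) auto
  qed
  ultimately show ?thesis using n_eq_2k k_eq by linarith
qed

lemma gen_poly_in_vanishing_Z: "gen_poly \<in> vanishing Z"
  using vanishing_Z_eq_gen_poly_multiples k_eq over_Fq_one by force

lemma weight_gen_poly: "weight n gen_poly = k + 1"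
proof (rule antisym)
  have "weight n gen_poly \<le> card {..k}"
    unfolding weight_def by (intro card_mono) (auto simp: degree_gen_poly[symmetric] intro: le_degree)
  thus "weight n gen_poly \<le> k + 1" by simp
qed (rule weight_ge_if_in_vanishing_Z[OF gen_poly_in_vanishing_Z gen_poly_nonzero])

subsection \<open>Duality\<close>

lemma theta_power_k: "\<theta> ^ k = -1"
proof -
  have "(\<theta> ^ k) ^ 2 = 1" using theta_power_n n_eq_2k by (simp add: power_mult[symmetric] mult.commute)
  moreover have "\<theta> ^ k \<noteq> 1" using theta_power_ne_1[of k] n_eq_2k k_eq by simp
  ultimately show ?thesis by (simp add: power2_eq_1_iff)
qed

lemma poly_phi_omega: "poly (phi n \<theta> q k c) (\<omega> i) = poly c (\<omega> (int k - i))"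
proof -
  have "\<omega> (int k - i) = \<omega> (int k) * \<omega> (- i)" by (simp flip: omega_add)
  hence "- (\<omega> i ^ q) = \<omega> (int k - i)"
    using theta_power_k by (simp add: frobenius_omega omega_of_nat)
  thus ?thesis
    by (simp add: phi_def poly_mod_xn1_omega poly_pcompose poly_monom theta_power_k)
qed

lemma phi_in_Rn: "c \<in> Rn q n \<Longrightarrow> phi n \<theta> q k c \<in> Rn q n"
proof -
  assume "c \<in> Rn q n"
  moreover have "over_Fq q (monom (inverse (\<theta> ^ k)) q)"
    using q_nonzero by (intro over_Fq_monom) (simp add: theta_power_k power_0_left frobenius_uminus)
  ultimately have "over_Fq q (phi n \<theta> q k c)"
    unfolding phi_def Rn_def by (blast intro: over_Fq_div_mod over_Fq_pcompose over_Fq_xn1)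
  moreover have "degree (phi n \<theta> q k c) < n"
    using degree_mod_less'[OF xn1_nonzero[OF n_pos]] n_pos
    by (cases "phi n \<theta> q k c = 0") (auto simp: phi_def)
  ultimately show ?thesis by (simp add: Rn_def)
qed

lemma phi_phi:
  assumes "c \<in> Rn q n"
  shows "phi n \<theta> q k (phi n \<theta> q k c) = c"
proof (rule poly_eqI_omega[where a = 0])
  show "degree (phi n \<theta> q k (phi n \<theta> q k c)) < n" "degree c < n"
    using assms phi_in_Rn[OF phi_in_Rn[OF assms]] by (simp_all add: Rn_def)
qed (simp add: poly_phi_omega)

lemma phi_image_vanishing:
  "phi n \<theta> q k ` vanishing S = vanishing ((\<lambda>i. int k - i) ` S)"
proof (intro equalityI subsetI)
  fix v assume "v \<in> phi n \<theta> q k ` vanishing S"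
  thus "v \<in> vanishing ((\<lambda>i. int k - i) ` S)"
    by (auto simp: vanishing_def phi_in_Rn poly_phi_omega)
next
  fix v assume v: "v \<in> vanishing ((\<lambda>i. int k - i) ` S)"
  hence "phi n \<theta> q k v \<in> vanishing S"
    by (auto simp: vanishing_def phi_in_Rn poly_phi_omega)
  moreover have "phi n \<theta> q k (phi n \<theta> q k v) = v" using v by (simp add: vanishing_def phi_phi)
  ultimately show "v \<in> phi n \<theta> q k ` vanishing S" by (metis image_eqI)
qed

lemma reflect_Z: "(\<lambda>i. int k - i) ` Z = P"
proof -
  have "(\<lambda>i. int k - i) ` Z \<subseteq> P" "P \<subseteq> (\<lambda>i. int k - i) ` Z"
    using k_eq by (auto simp: P_def Z_def intro!: image_eqI[where x = "int k - _"])
  thus ?thesis by blast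
qed

lemma vanishing_P_subset_dual: "vanishing P \<subseteq> dual q n (vanishing Z)"
proof
  fix v assume v: "v \<in> vanishing P"
  have "(\<Sum>j<n. coeff c j * coeff v j) = 0" if c: "c \<in> vanishing Z" for c
  proof -
    have "(\<Sum>j<n. coeff c j * coeff v j) = (\<Sum>s\<in>P \<union> Z. poly c (\<omega> s) * poly v (\<omega> (- s)))"
      using parseval[of c v "- int l"] c v by (simp add: vanishing_def Rn_def of_nat_n P_Un_Z)
    also have "\<dots> = 0"
      using c v by (intro sum.neutral) (auto simp: vanishing_def P_def)
    finally show ?thesis .
  qed
  thus "v \<in> dual q n (vanishing Z)" using v by (simp add: dual_def vanishing_def)
qed

definition trace_codeword :: "int \<Rightarrow> 'a \<Rightarrow> 'a poly" where
  "trace_codeword t \<beta> = (\<Sum>j<n. monom (\<beta> * \<omega> (t * int j) + \<beta> ^ q * \<omega> (- t * int j)) j)"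

lemma coeff_trace_codeword:
  "coeff (trace_codeword t \<beta>) j = (if j < n then \<beta> * \<omega> (t * int j) + \<beta> ^ q * \<omega> (- t * int j) else 0)"
  by (simp add: trace_codeword_def coeff_sum coeff_monom)

lemma trace_codeword_in_vanishing_Z:
  assumes "t \<in> P"
  shows "trace_codeword t \<beta> \<in> vanishing Z"
proof -
  let ?c = "trace_codeword t \<beta>"
  have "degree ?c < n"
    using n_pos by (intro degree_lessI) (auto simp: coeff_trace_codeword)
  moreover have "over_Fq q ?c"
    by (auto simp: over_Fq_def Fq_def coeff_trace_codeword frobenius_add power_mult_distrib
                   frobenius_omega frobenius_frobenius q_nonzero power_0_left)
  moreover have "poly ?c (\<omega> s) = 0" if s: "s \<in> Z" for s
  proof -
    have "poly ?c (\<omega> s) = \<beta> * (\<Sum>j<n. \<omega> ((s + t) * int j)) + \<beta> ^ q * (\<Sum>j<n. \<omega> ((s - t) * int j))"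
      using \<open>degree ?c < n\<close>
      by (simp add: poly_omega coeff_trace_codeword sum.distrib sum_distrib_left algebra_simps
                    omega_add[symmetric])
    moreover have "0 < s + t" "s + t < int n" "0 < s - t" "s - t < int n"
      using s assms n_eq q_eq by (auto simp: P_def Z_def)
    ultimately show ?thesis using zdvd_imp_le by (fastforce simp: sum_omega_lessThan)
  qed
  ultimately show ?thesis by (simp add: vanishing_def Rn_def)
qed

lemma inner_trace_codeword:
  assumes "v \<in> Rn q n"
  shows "(\<Sum>j<n. coeff (trace_codeword t \<beta>) j * coeff v j) = \<beta> * poly v (\<omega> t) + (\<beta> * poly v (\<omega> t)) ^ q"
proof -
  have v: "over_Fq q v" "degree v < n" using assms by (simp_all add: Rn_def)
  have "(\<Sum>j<n. coeff (trace_codeword t \<beta>) j * coeff v j) = \<beta> * poly v (\<omega> t) + \<beta> ^ q * poly v (\<omega> (- t))"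
    using v(2) by (simp add: poly_omega coeff_trace_codeword sum.distrib sum_distrib_left algebra_simps)
  also have "poly v (\<omega> (- t)) = poly v (\<omega> t) ^ q" by (simp add: poly_frobenius[OF v(1)] frobenius_omega)
  finally show ?thesis by (simp add: power_mult_distrib)
qed

lemma dual_subset_vanishing_P: "dual q n (vanishing Z) \<subseteq> vanishing P"
proof
  fix v assume "v \<in> dual q n (vanishing Z)"
  hence v: "v \<in> Rn q n" and orth: "\<And>c. c \<in> vanishing Z \<Longrightarrow> (\<Sum>j<n. coeff c j * coeff v j) = 0"
    by (auto simp: dual_def)
  have "poly v (\<omega> t) = 0" if t: "t \<in> P" for t
  proof (rule ccontr)
    assume nz: "poly v (\<omega> t) \<noteq> 0"
    obtain x :: 'a where x: "x + x ^ q \<noteq> 0" using trace_nonzero by blast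
    have "\<beta> * poly v (\<omega> t) + (\<beta> * poly v (\<omega> t)) ^ q = 0" for \<beta>
      using orth[OF trace_codeword_in_vanishing_Z[OF t]] inner_trace_codeword[OF v] by simp
    from this[of "x / poly v (\<omega> t)"] show False using x nz by simp
  qed
  thus "v \<in> vanishing P" using v by (simp add: vanishing_def)
qed

lemma dual_vanishing_Z: "dual q n (vanishing Z) = vanishing P"
  using vanishing_P_subset_dual dual_subset_vanishing_P by blast

lemma mu_invariant_P_mod_n: "mu_invariant q n P_mod_n"
proof -
  have mult_q: "q * nat (i mod int n) mod n = nat (- i mod int n)" for i
  proof -
    have "int q * i - - i = int n * i" using n_eq by (simp add: algebra_simps)
    hence "(int q * (i mod int n)) mod int n = - i mod int n"
      by (simp add: mod_mult_right_eq mod_eq_dvd_iff)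
    moreover have "int (q * nat (i mod int n) mod n) = (int q * (i mod int n)) mod int n"
      using n_pos by (simp add: zmod_int)
    ultimately show ?thesis by linarith
  qed
  have "(\<lambda>i. q * i mod n) ` P_mod_n = (\<lambda>i. nat (i mod int n)) ` uminus ` P"
    by (simp add: image_image mult_q)
  also have "uminus ` P = P" by (force simp: P_def)
  finally show ?thesis unfolding mu_invariant_def .
qed

lemma phi_image_vanishing_Z: "phi n \<theta> q k ` vanishing Z = dual q n (vanishing Z)"
  by (simp add: phi_image_vanishing reflect_Z dual_vanishing_Z)

lemma iso_self_dual_vanishing_Z: "iso_self_dual q n \<theta> (vanishing Z)"
  unfolding iso_self_dual_def
proof (intro exI conjI)
  show "0 < q" "coprime q n" "k < n" using q_gt_1 n_eq n_eq_2k k_eq by simp_all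
  have "q * k = k + n * (2 * l)" using q_eq n_eq_2k k_eq by (simp add: algebra_simps)
  thus "q * k mod n = k mod n" by simp
qed (rule phi_image_vanishing_Z)

end

theorem theorem4p8:
  fixes q :: nat and \<theta> :: "'a::{field,finite}"
  assumes "\<exists>p m. prime p \<and> 0 < m \<and> q = p ^ m"
    and "card (UNIV :: 'a set) = q ^ 2"
    and "q mod 4 = 1"
    and "\<theta> ^ (q + 1) = 1"
    and "\<forall>k. 0 < k \<and> k < q + 1 \<longrightarrow> \<theta> ^ k \<noteq> 1"
  shows "let n = q + 1; n' = n div 2; l = (n - 2) div 4;
             P = (\<lambda>i. nat (i mod int n)) ` {- int l .. int l};
             C = CP q n \<theta> P
         in mu_invariant q n P
          \<and> iso_self_dual q n \<theta> C
          \<and> phi n \<theta> (n - 1) n' ` C = dual q n C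
          \<and> C = {c \<in> Rn q n. \<exists>a :: 'a poly. degree a < n' \<and>
                   (\<forall>j<n. coeff c j = \<theta> ^ (j * l) * poly a (inverse \<theta> ^ j))}
          \<and> card C = q ^ ((q + 1) div 2)
          \<and> (\<forall>c\<in>C. c \<noteq> 0 \<longrightarrow> (q + 3) div 2 \<le> weight n c)
          \<and> (\<exists>c\<in>C. c \<noteq> 0 \<and> weight n c = (q + 3) div 2)"
proof -
  define l where "l = (q + 1 - 2) div 4"
  have q_eq: "q = 4 * l + 1" using assms(3) unfolding l_def by presburger
  interpret cyclic_code_setting "q + 1" \<theta> q l "2 * l + 1"
    using assms q_eq by unfold_locales auto
  have n': "(q + 1) div 2 = 2 * l + 1" and weight: "(q + 3) div 2 = 2 * l + 1 + 1"
    using q_eq by simp_all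
  have C: "CP q (q + 1) \<theta> ((\<lambda>i. nat (i mod int (q + 1))) ` {- int l .. int l}) = vanishing Z"
    using CP_eq_vanishing_Z by (simp add: P_def)
  show ?thesis
    unfolding Let_def l_def[symmetric] C n' weight
  proof (intro conjI)
    show "mu_invariant q (q + 1) ((\<lambda>i. nat (i mod int (q + 1))) ` {- int l..int l})"
      using mu_invariant_P_mod_n by (simp add: P_def)
    show "iso_self_dual q (q + 1) \<theta> (vanishing Z)" by (rule iso_self_dual_vanishing_Z)
    show "phi (q + 1) \<theta> (q + 1 - 1) (2 * l + 1) ` vanishing Z = dual q (q + 1) (vanishing Z)"
      using phi_image_vanishing_Z by simp
    show "vanishing Z = {c \<in> Rn q (q + 1). \<exists>a :: 'a poly. degree a < 2 * l + 1 \<and>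
            (\<forall>j<q + 1. coeff c j = \<theta> ^ (j * l) * poly a (inverse \<theta> ^ j))}"
      unfolding vanishing_Z_eq_alternant alternant_def ..
    show "card (vanishing Z) = q ^ (2 * l + 1)" by (rule card_vanishing_Z)
    show "\<forall>c\<in>vanishing Z. c \<noteq> 0 \<longrightarrow> 2 * l + 1 + 1 \<le> weight (q + 1) c"
      using weight_ge_if_in_vanishing_Z by blast
    show "\<exists>c\<in>vanishing Z. c \<noteq> 0 \<and> weight (q + 1) c = 2 * l + 1 + 1"
      using gen_poly_in_vanishing_Z gen_poly_nonzero weight_gen_poly by blast
  qed
qed

end
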